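(* Let $\mathbb{F}$ be a field and $p$ a prime. Let $G$ be an irreducible subgroup of $\widetilde{\mathrm{M}}(p,\mathbb{F})$ whose diagonal subgroup $A=G\cap\mathrm{D}(p,\mathbb{F})$ is not contained in the group of scalar matrices. Suppose that $w\in\mathrm{GL}(p,\mathbb{F})$ satisfies $w^{-1}Gw\le\widetilde{\mathrm{M}}(p,\mathbb{F})$ and $w^{-1}Aw\le \mathrm{D}(p,\mathbb{F})$. Then $w$ is monomial; furthermore, if $\mathbb{F}$ is algebraically closed, then some scalar multiple of $w$ lies in $\widetilde{\mathrm{M}}(p,\mathbb{F})$.
   Context: $\mathrm{D}(p,\mathbb{F})$ is the group of invertible diagonal $p\times p$ matrices over $\mathbb{F}$. $\widetilde{\mathrm{M}}(p,\mathbb{F})$ denotes the group of all $p\times p$ monomial matrices whose non-zero entries are roots of unity in $\mathbb{F}$. *)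

theory Defs
  imports "HOL-Analysis.Analysis" "HOL-Computational_Algebra.Polynomial"
begin

(* p x p matrices over a field 'a are modelled as 'a ^ 'n ^ 'n with CARD('n) = p. *)

definition root_of_unity :: "'a::field \<Rightarrow> bool" where
  "root_of_unity x \<longleftrightarrow> (\<exists>k::nat. k > 0 \<and> x ^ k = 1)"

definition diag_group :: "('a::field ^ 'n ^ 'n) set" where
  "diag_group = {A. (\<forall>i j. i \<noteq> j \<longrightarrow> A $ i $ j = 0) \<and> invertible A}"

definition monomial_mat :: "'a::field ^ 'n ^ 'n \<Rightarrow> bool" where
  "monomial_mat A \<longleftrightarrow>
     (\<exists>\<sigma>. \<sigma> permutes (UNIV :: 'n set) \<and> (\<forall>i j. A $ i $ j \<noteq> 0 \<longleftrightarrow> j = \<sigma> i))"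

definition Mtilde :: "('a::field ^ 'n ^ 'n) set" where
  "Mtilde = {A. monomial_mat A \<and> (\<forall>i j. A $ i $ j \<noteq> 0 \<longrightarrow> root_of_unity (A $ i $ j))}"

definition mat_group :: "('a::field ^ 'n ^ 'n) set \<Rightarrow> bool" where
  "mat_group G \<longleftrightarrow> mat 1 \<in> G \<and> (\<forall>g\<in>G. invertible g \<and> matrix_inv g \<in> G)
     \<and> (\<forall>g\<in>G. \<forall>h\<in>G. g ** h \<in> G)"

definition lin_subspace :: "('a::field ^ 'n) set \<Rightarrow> bool" where
  "lin_subspace W \<longleftrightarrow> 0 \<in> W \<and> (\<forall>u\<in>W. \<forall>v\<in>W. u + v \<in> W) \<and> (\<forall>c. \<forall>v\<in>W. c *s v \<in> W)"

definition irreducible_mat_group :: "('a::field ^ 'n ^ 'n) set \<Rightarrow> bool" where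
  "irreducible_mat_group G \<longleftrightarrow>
     (\<forall>W. lin_subspace W \<and> (\<forall>g\<in>G. \<forall>v\<in>W. g *v v \<in> W) \<longrightarrow> W = {0} \<or> W = UNIV)"

definition alg_closed_field :: "'a::field itself \<Rightarrow> bool" where
  "alg_closed_field _ \<longleftrightarrow> (\<forall>q::'a poly. degree q > 0 \<longrightarrow> (\<exists>x. poly q x = 0))"

end

theory Submission
  imports Defs
begin

(* The diagonal subgroup A is seen through its characters chi_i(a) = a_ii.  A monomial
   irreducible G permutes the coordinates transitively and permutes the fibres of
   i |-> chi_i, so all fibres have the same size, which divides the prime p; fibres of
   size p would make A scalar, hence the chi_i are distinct.  If w^-1 A w is diagonal,
   a nonzero entry w_ij forces (w^-1 a w)_jj = a_ii for all a in A, so every column of w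
   has a single nonzero entry and w is monomial.  Comparing entries of w (w^-1 g w) = g w
   shows that the ratio of the nonzero entries of w in rows g(i) and i is a ratio of
   roots of unity; by transitivity, dividing w by any one of its nonzero entries
   lands in Mtilde. *)

lemma matrix_inv_right:
  fixes A :: "'a::semiring_1^'n^'m"
  assumes "invertible A"
  shows "A ** matrix_inv A = mat 1"
  using someI_ex[OF assms[unfolded invertible_def]] unfolding matrix_inv_def by blast

lemma matrix_inv_left:
  fixes A :: "'a::semiring_1^'n^'m"
  assumes "invertible A"
  shows "matrix_inv A ** A = mat 1"
  using someI_ex[OF assms[unfolded invertible_def]] unfolding matrix_inv_def by blast

lemma matrix_mul_entry_row_support:
  fixes A :: "'a::semiring_1^'n^'m"
  assumes "\<And>l. l \<noteq> k \<Longrightarrow> A $ i $ l = 0"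
  shows "(A ** B) $ i $ j = A $ i $ k * B $ k $ j"
  unfolding matrix_matrix_mult_def using assms by (simp add: sum.remove[of UNIV k])

lemma matrix_mul_entry_column_support:
  fixes A :: "'a::semiring_1^'n^'m"
  assumes "\<And>l. l \<noteq> k \<Longrightarrow> B $ l $ j = 0"
  shows "(A ** B) $ i $ j = A $ i $ k * B $ k $ j"
  unfolding matrix_matrix_mult_def using assms by (simp add: sum.remove[of UNIV k])

lemma matrix_vector_mul_entry_row_support:
  fixes A :: "'a::semiring_1^'n^'m"
  assumes "\<And>l. l \<noteq> k \<Longrightarrow> A $ i $ l = 0"
  shows "(A *v v) $ i = A $ i $ k * v $ k"
  unfolding matrix_vector_mult_def using assms by (simp add: sum.remove[of UNIV k])

lemma invertible_row_nonzero:
  fixes A :: "'a::semiring_1^'n^'m"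
  assumes "invertible A"
  shows "\<exists>j. A $ i $ j \<noteq> 0"
proof (rule ccontr)
  assume "\<not> ?thesis"
  then have "(A ** matrix_inv A) $ i $ i = 0"
    by (simp add: matrix_matrix_mult_def)
  then show False
    using matrix_inv_right[OF assms] by (simp add: mat_def)
qed

lemma invertible_column_nonzero:
  fixes A :: "'a::semiring_1^'n^'m"
  assumes "invertible A"
  shows "\<exists>i. A $ i $ j \<noteq> 0"
proof (rule ccontr)
  assume "\<not> ?thesis"
  then have "(matrix_inv A ** A) $ j $ j = 0"
    by (simp add: matrix_matrix_mult_def)
  then show False
    using matrix_inv_left[OF assms] by (simp add: mat_def)
qed

definition diagonal_mat :: "'a::zero ^ 'n ^ 'n \<Rightarrow> bool" where
  "diagonal_mat A \<longleftrightarrow> (\<forall>i j. i \<noteq> j \<longrightarrow> A $ i $ j = 0)"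

lemma diag_group_iff: "A \<in> diag_group \<longleftrightarrow> diagonal_mat A \<and> invertible A"
  unfolding diag_group_def diagonal_mat_def by simp

lemma diagonal_mat_eq_mat:
  assumes "diagonal_mat A" "\<And>i. A $ i $ i = c"
  shows "A = mat c"
  using assms unfolding diagonal_mat_def by (simp add: vec_eq_iff mat_def)

lemma mat_mult_entry: "(mat c ** A) $ i $ j = c * A $ i $ j"
  by (subst matrix_mul_entry_row_support[where k = i]) (simp_all add: mat_def)

definition monomial_perm :: "'a::field ^ 'n ^ 'n \<Rightarrow> 'n \<Rightarrow> 'n" where
  "monomial_perm A = (SOME \<sigma>. \<sigma> permutes UNIV \<and> (\<forall>i j. A $ i $ j \<noteq> 0 \<longleftrightarrow> j = \<sigma> i))"

lemma
  assumes "monomial_mat A"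
  shows monomial_perm_permutes: "monomial_perm A permutes UNIV"
    and monomial_mat_nonzero_iff: "A $ i $ j \<noteq> 0 \<longleftrightarrow> j = monomial_perm A i"
  using someI_ex[OF assms[unfolded monomial_mat_def]] unfolding monomial_perm_def by blast+

lemma monomial_perm_nonzero: "monomial_mat A \<Longrightarrow> A $ i $ monomial_perm A i \<noteq> 0"
  using monomial_mat_nonzero_iff by blast

lemma monomial_mat_zero: "monomial_mat A \<Longrightarrow> j \<noteq> monomial_perm A i \<Longrightarrow> A $ i $ j = 0"
  using monomial_mat_nonzero_iff by blast

lemma monomial_perm_eqI: "monomial_mat A \<Longrightarrow> A $ i $ j \<noteq> 0 \<Longrightarrow> monomial_perm A i = j"
  using monomial_mat_nonzero_iff by metis

lemma monomial_mult_entry: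
  "monomial_mat A \<Longrightarrow> (A ** B) $ i $ j = A $ i $ monomial_perm A i * B $ monomial_perm A i $ j"
  by (rule matrix_mul_entry_row_support) (simp add: monomial_mat_zero)

lemma monomial_mult_vec_entry:
  "monomial_mat A \<Longrightarrow> (A *v v) $ i = A $ i $ monomial_perm A i * v $ monomial_perm A i"
  by (rule matrix_vector_mul_entry_row_support) (simp add: monomial_mat_zero)

lemma monomial_perm_mult:
  assumes "monomial_mat A" "monomial_mat B" "monomial_mat (A ** B)"
  shows "monomial_perm (A ** B) i = monomial_perm B (monomial_perm A i)"
  using assms by (intro monomial_perm_eqI) (simp_all add: monomial_mult_entry monomial_perm_nonzero)

lemma monomial_perm_mat_1:
  assumes "monomial_mat (mat 1 :: 'a::field ^ 'n ^ 'n)"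
  shows "monomial_perm (mat 1 :: 'a ^ 'n ^ 'n) i = i"
  using assms by (rule monomial_perm_eqI) (simp add: mat_def)

lemma Mtilde_monomial: "A \<in> Mtilde \<Longrightarrow> monomial_mat A"
  unfolding Mtilde_def by simp

lemma root_of_unity_divide:
  assumes "root_of_unity x" "root_of_unity y"
  shows "root_of_unity (x / y)"
proof -
  obtain k m where "k > 0" "x ^ k = 1" "m > 0" "y ^ m = 1"
    using assms unfolding root_of_unity_def by blast
  then have "x ^ (k * m) = 1" "y ^ (k * m) = 1"
    by (metis power_mult power_one mult.commute)+
  then have "(x / y) ^ (k * m) = 1"
    by (simp add: power_divide)
  with \<open>k > 0\<close> \<open>m > 0\<close> show ?thesis
    unfolding root_of_unity_def by (intro exI[of _ "k * m"]) simp
qed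

lemma mat_groupD:
  assumes "mat_group G"
  shows "mat 1 \<in> G" and "g \<in> G \<Longrightarrow> invertible g" and "g \<in> G \<Longrightarrow> matrix_inv g \<in> G"
    and "g \<in> G \<Longrightarrow> h \<in> G \<Longrightarrow> g ** h \<in> G"
  using assms unfolding mat_group_def by blast+

lemma conj_intertwines:
  fixes w :: "'a::semiring_1 ^ 'n ^ 'n"
  assumes "invertible w"
  shows "w ** (matrix_inv w ** g ** w) = g ** w"
  by (simp add: matrix_mul_assoc matrix_inv_right[OF assms])

lemma monomial_group_transitive:
  fixes G :: "('a::field ^ 'n ^ 'n) set"
  assumes G: "mat_group G" and mono: "\<And>g. g \<in> G \<Longrightarrow> monomial_mat g"
    and irr: "irreducible_mat_group G"
  shows "\<exists>g\<in>G. monomial_perm g i = j"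
proof -
  define S where "S = {i. \<exists>g\<in>G. monomial_perm g i = j}"
  \<comment> \<open>the coordinate subspace on the indices that G moves to j is G-invariant\<close>
  define W where "W = {v::'a ^ 'n. \<forall>k. k \<notin> S \<longrightarrow> v $ k = 0}"
  have "j \<in> S"
    unfolding S_def using mat_groupD(1)[OF G] mono monomial_perm_mat_1 by blast
  then have axis_j: "axis j (1::'a) \<in> W"
    unfolding W_def by (simp add: axis_def)
  have "lin_subspace W"
    unfolding lin_subspace_def W_def by simp
  moreover have "g *v v \<in> W" if g: "g \<in> G" and v: "v \<in> W" for g v
  proof -
    have "monomial_perm g k \<notin> S" if "k \<notin> S" for k
    proof
      assume "monomial_perm g k \<in> S"
      then obtain h where h: "h \<in> G" "monomial_perm h (monomial_perm g k) = j"
        unfolding S_def by blast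
      then have "monomial_perm (g ** h) k = j"
        using g by (simp add: monomial_perm_mult mono mat_groupD(4)[OF G])
      with \<open>k \<notin> S\<close> g h(1) show False
        unfolding S_def using mat_groupD(4)[OF G] by blast
    qed
    with v show ?thesis
      unfolding W_def by (simp add: monomial_mult_vec_entry mono g)
  qed
  ultimately have "W = {0} \<or> W = UNIV"
    using irr unfolding irreducible_mat_group_def by blast
  with axis_j have "W = UNIV"
    by (auto simp: axis_eq_0_iff)
  then have "axis i (1::'a) \<in> W"
    by simp
  then show ?thesis
    unfolding W_def S_def by (auto simp: axis_def split: if_splits)
qed

lemma intertwined_diagonal_entries:
  fixes w :: "'a::field ^ 'n ^ 'n"
  assumes "diagonal_mat a" "diagonal_mat b" "w ** b = a ** w" "w $ i $ j \<noteq> 0"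
  shows "b $ j $ j = a $ i $ i"
proof -
  have "(w ** b) $ i $ j = w $ i $ j * b $ j $ j"
    using assms(2) by (intro matrix_mul_entry_column_support) (simp add: diagonal_mat_def)
  moreover have "(a ** w) $ i $ j = a $ i $ i * w $ i $ j"
    using assms(1) by (intro matrix_mul_entry_row_support) (simp add: diagonal_mat_def)
  ultimately show ?thesis
    using assms(3,4) by (simp add: mult.commute)
qed

lemma monomial_intertwined_diagonal:
  fixes g :: "'a::field ^ 'n ^ 'n"
  assumes g: "monomial_mat g" and a: "diagonal_mat a" and gb: "g ** b = a ** g"
  shows "diagonal_mat b" and "b $ monomial_perm g i $ monomial_perm g i = a $ i $ i"
proof -
  have "(a ** g) $ i $ j = a $ i $ i * g $ i $ j" for i j
    using a by (intro matrix_mul_entry_row_support) (simp add: diagonal_mat_def)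
  with gb have row: "g $ i $ monomial_perm g i * b $ monomial_perm g i $ j = a $ i $ i * g $ i $ j"
    for i j
    using monomial_mult_entry[OF g, of b i j] by simp
  show "b $ monomial_perm g i $ monomial_perm g i = a $ i $ i"
    using row[of i "monomial_perm g i"] monomial_perm_nonzero[OF g, of i] by (simp add: mult.commute)
  have off_diagonal: "b $ monomial_perm g i $ j = 0" if "j \<noteq> monomial_perm g i" for i j
    using row[of i j] monomial_perm_nonzero[OF g, of i] monomial_mat_zero[OF g that] by simp
  show "diagonal_mat b"
    unfolding diagonal_mat_def
  proof (intro allI impI)
    fix k j :: 'n
    assume "k \<noteq> j"
    have "k = monomial_perm g (inv (monomial_perm g) k)"
      by (simp add: permutes_inverses(1)[OF monomial_perm_permutes[OF g]])
    with \<open>k \<noteq> j\<close> off_diagonal show "b $ k $ j = 0"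
      by metis
  qed
qed

(* The character chi_i of the header; restricting to A makes equality of characters mean
   agreement on A. *)
definition diag_char :: "('a ^ 'n ^ 'n) set \<Rightarrow> 'n \<Rightarrow> 'a ^ 'n ^ 'n \<Rightarrow> 'a" where
  "diag_char A i = (\<lambda>a\<in>A. a $ i $ i)"

lemma diag_char_eq_iff: "diag_char A i = diag_char A j \<longleftrightarrow> (\<forall>a\<in>A. a $ i $ i = a $ j $ j)"
  unfolding diag_char_def by (auto simp: restrict_def fun_eq_iff)

lemma diag_subgroup_conj:
  fixes G :: "('a::field ^ 'n ^ 'n) set"
  assumes G: "mat_group G" and mono: "\<And>g. g \<in> G \<Longrightarrow> monomial_mat g"
    and g: "g \<in> G" and a: "a \<in> G \<inter> diag_group"
  shows "matrix_inv g ** a ** g \<in> G \<inter> diag_group"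
    and "(matrix_inv g ** a ** g) $ monomial_perm g i $ monomial_perm g i = a $ i $ i"
proof -
  let ?b = "matrix_inv g ** a ** g"
  have "?b \<in> G"
    using a g by (simp add: mat_groupD[OF G])
  have "g ** ?b = a ** g"
    using conj_intertwines[OF mat_groupD(2)[OF G g]] .
  then have "diagonal_mat ?b" "?b $ monomial_perm g i $ monomial_perm g i = a $ i $ i"
    using monomial_intertwined_diagonal mono[OF g] a diag_group_iff by blast+
  with \<open>?b \<in> G\<close> show "?b \<in> G \<inter> diag_group" "?b $ monomial_perm g i $ monomial_perm g i = a $ i $ i"
    by (simp_all add: diag_group_iff mat_groupD(2)[OF G])
qed

lemma kernel_diag_char_monomial_perm_reflect:
  fixes G :: "('a::field ^ 'n ^ 'n) set"
  assumes G: "mat_group G" and mono: "\<And>g. g \<in> G \<Longrightarrow> monomial_mat g" and g: "g \<in> G"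
    and xy: "(monomial_perm g x, monomial_perm g y) \<in> kernel (diag_char (G \<inter> diag_group))"
  shows "(x, y) \<in> kernel (diag_char (G \<inter> diag_group))"
proof -
  have "a $ x $ x = a $ y $ y" if a: "a \<in> G \<inter> diag_group" for a
  proof -
    let ?b = "matrix_inv g ** a ** g"
    have "?b \<in> G \<inter> diag_group"
      by (rule diag_subgroup_conj(1)[OF G mono g a])
    with xy have "?b $ monomial_perm g x $ monomial_perm g x = ?b $ monomial_perm g y $ monomial_perm g y"
      by (simp add: kernel_def diag_char_eq_iff)
    then show ?thesis
      by (simp add: diag_subgroup_conj(2)[OF G mono g a])
  qed
  then show ?thesis
    by (simp add: kernel_def diag_char_eq_iff)
qed

lemma card_Image_permutes_le:
  fixes r :: "('n::finite \<times> 'n) set"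
  assumes f: "f permutes UNIV" and reflect: "\<And>x y. (f x, f y) \<in> r \<Longrightarrow> (x, y) \<in> r"
  shows "card (r `` {f i}) \<le> card (r `` {i})"
proof (rule card_inj_on_le)
  show "inj_on (inv f) (r `` {f i})"
    using permutes_inj[OF permutes_inv[OF f]] by (simp add: inj_on_def)
  show "inv f ` (r `` {f i}) \<subseteq> r `` {i}"
  proof
    fix y
    assume "y \<in> inv f ` (r `` {f i})"
    then have "(f i, f y) \<in> r"
      by (auto simp: permutes_inverses(1)[OF f])
    then have "(i, y) \<in> r"
      by (rule reflect)
    then show "y \<in> r `` {i}"
      by simp
  qed
qed (rule finite)

lemma equiv_prime_card_trivial:
  fixes r :: "('n::finite \<times> 'n) set"
  assumes p: "prime CARD('n)" and r: "equiv UNIV r"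
    and same_card: "\<And>x y. card (r `` {x}) = card (r `` {y})"
  shows "r = Id \<or> r = UNIV"
proof -
  fix x0 :: 'n
  have self: "x \<in> r `` {x}" for x
    using r by (auto simp: equiv_def refl_on_def)
  have "card (r `` {x0}) dvd CARD('n)"
  proof (rule equiv_imp_dvd_card[OF finite r])
    fix X
    assume "X \<in> UNIV // r"
    then obtain x where "X = r `` {x}"
      by (auto simp: quotient_def)
    then show "card (r `` {x0}) dvd card X"
      using same_card[of x0 x] by simp
  qed
  with p consider "card (r `` {x0}) = 1" | "card (r `` {x0}) = CARD('n)"
    by (auto simp: prime_nat_iff)
  then show ?thesis
  proof cases
    case 1
    have "r `` {x} = {x}" for x
      using 1 same_card[of x x0] self[of x] by (metis card_1_singletonE singletonD)
    then have "(x, y) \<in> r \<longleftrightarrow> x = y" for x y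
      by (metis Image_singleton_iff singleton_iff)
    then have "r = Id"
      by (simp add: set_eq_iff split_paired_all)
    then show ?thesis ..
  next
    case 2
    have "r `` {x} = UNIV" for x
      by (rule card_subset_eq[OF finite subset_UNIV]) (simp add: 2 same_card[of x x0])
    then have "(x, y) \<in> r" for x y
      by (metis Image_singleton_iff UNIV_I)
    then have "r = UNIV"
      by (simp add: set_eq_iff split_paired_all)
    then show ?thesis ..
  qed
qed

lemma diag_char_inj:
  fixes G :: "('a::field ^ 'n ^ 'n) set"
  assumes p: "prime CARD('n)" and G: "mat_group G" and mono: "\<And>g. g \<in> G \<Longrightarrow> monomial_mat g"
    and irr: "irreducible_mat_group G" and nonscalar: "\<not> (G \<inter> diag_group \<subseteq> range (\<lambda>c. mat c))"
  shows "inj (diag_char (G \<inter> diag_group))"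
proof -
  let ?A = "G \<inter> diag_group"
  let ?r = "kernel (diag_char ?A)"
  have "card (?r `` {i}) \<le> card (?r `` {j})" for i j
  proof -
    obtain g where g: "g \<in> G" "monomial_perm g j = i"
      using monomial_group_transitive[OF G mono irr] by blast
    from card_Image_permutes_le[OF monomial_perm_permutes[OF mono[OF g(1)]]
        kernel_diag_char_monomial_perm_reflect[OF G mono g(1)], where i = j] g(2)
    show ?thesis
      by simp
  qed
  then have "card (?r `` {i}) = card (?r `` {j})" for i j
    by (meson order_antisym)
  then have "?r = Id \<or> ?r = UNIV"
    by (rule equiv_prime_card_trivial[OF p equiv_kernel])
  moreover have "?r \<noteq> UNIV"
  proof
    assume all: "?r = UNIV"
    fix i0 :: 'n
    have "a = mat (a $ i0 $ i0)" if "a \<in> ?A" for a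
    proof (rule diagonal_mat_eq_mat)
      show "diagonal_mat a"
        using that diag_group_iff by blast
      fix i
      have "(i, i0) \<in> ?r"
        using all by simp
      then show "a $ i $ i = a $ i0 $ i0"
        using that by (simp add: kernel_def diag_char_eq_iff)
    qed
    with nonscalar show False
      by blast
  qed
  ultimately have "?r = Id"
    by blast
  show ?thesis
  proof (rule injI)
    fix x y
    assume "diag_char ?A x = diag_char ?A y"
    then have "(x, y) \<in> ?r"
      by (simp add: kernel_def)
    with \<open>?r = Id\<close> show "x = y"
      by simp
  qed
qed

lemma invertible_monomial_matI:
  fixes w :: "'a::field ^ 'n ^ 'n"
  assumes w: "invertible w" and column: "\<And>i i' j. w $ i $ j \<noteq> 0 \<Longrightarrow> w $ i' $ j \<noteq> 0 \<Longrightarrow> i = i'"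
  shows "monomial_mat w"
proof -
  obtain \<tau> where "\<And>j. w $ \<tau> j $ j \<noteq> 0"
    using invertible_column_nonzero[OF w] by metis
  with column have nonzero_iff: "w $ i $ j \<noteq> 0 \<longleftrightarrow> i = \<tau> j" for i j
    by blast
  have "surj \<tau>"
    using invertible_row_nonzero[OF w] nonzero_iff by (metis surjI)
  then have "bij \<tau>"
    by (simp add: bij_def finite_UNIV_surj_inj)
  then have "\<tau> permutes UNIV"
    by (simp add: permutes_altdef)
  then show ?thesis
    unfolding monomial_mat_def
    by (intro exI[of _ "inv \<tau>"]) (metis nonzero_iff permutes_inv permutes_inverses)
qed

lemma monomial_mat_if_conj_diagonal:
  fixes w :: "'a::field ^ 'n ^ 'n"
  assumes w: "invertible w" and chars: "inj (diag_char A)" and A: "A \<subseteq> diag_group"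
    and conj: "\<forall>a\<in>A. matrix_inv w ** a ** w \<in> diag_group"
  shows "monomial_mat w"
proof (rule invertible_monomial_matI[OF w])
  fix i i' j
  assume "w $ i $ j \<noteq> 0" "w $ i' $ j \<noteq> 0"
  have "a $ i $ i = a $ i' $ i'" if "a \<in> A" for a
  proof -
    let ?b = "matrix_inv w ** a ** w"
    have "diagonal_mat a" "diagonal_mat ?b"
      using that A conj diag_group_iff by blast+
    with conj_intertwines[OF w] \<open>w $ i $ j \<noteq> 0\<close> \<open>w $ i' $ j \<noteq> 0\<close>
    have "?b $ j $ j = a $ i $ i" "?b $ j $ j = a $ i' $ i'"
      by (blast intro: intertwined_diagonal_entries)+
    then show ?thesis
      by simp
  qed
  then show "i = i'"
    using chars by (auto simp: inj_def diag_char_eq_iff)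
qed

definition monomial_coeff :: "'a::field ^ 'n ^ 'n \<Rightarrow> 'n \<Rightarrow> 'a" where
  "monomial_coeff A i = A $ i $ monomial_perm A i"

lemma monomial_coeff_nonzero: "monomial_mat A \<Longrightarrow> monomial_coeff A i \<noteq> 0"
  unfolding monomial_coeff_def by (rule monomial_perm_nonzero)

lemma Mtilde_intertwined_coeff_ratio:
  fixes w :: "'a::field ^ 'n ^ 'n"
  assumes w: "monomial_mat w" and g: "g \<in> Mtilde" and h: "h \<in> Mtilde" and wh: "w ** h = g ** w"
  shows "root_of_unity (monomial_coeff w (monomial_perm g i) / monomial_coeff w i)"
proof -
  let ?j = "monomial_perm w (monomial_perm g i)"
  let ?h = "h $ monomial_perm w i $ ?j" and ?g = "g $ i $ monomial_perm g i"
  have "(w ** h) $ i $ ?j = (g ** w) $ i $ ?j"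
    using wh by simp
  then have eq: "monomial_coeff w i * ?h = ?g * monomial_coeff w (monomial_perm g i)"
    by (simp add: monomial_mult_entry w Mtilde_monomial[OF g] monomial_coeff_def)
  have "?g \<noteq> 0"
    by (rule monomial_perm_nonzero[OF Mtilde_monomial[OF g]])
  with eq have "?h \<noteq> 0"
    using monomial_coeff_nonzero[OF w] by auto
  with \<open>?g \<noteq> 0\<close> g h have "root_of_unity (?h / ?g)"
    unfolding Mtilde_def by (blast intro: root_of_unity_divide)
  moreover have "?h / ?g = monomial_coeff w (monomial_perm g i) / monomial_coeff w i"
    using eq \<open>?g \<noteq> 0\<close> monomial_coeff_nonzero[OF w] by (simp add: field_simps)
  ultimately show ?thesis
    by simp
qed

lemma mat_mult_monomial_Mtilde:
  fixes w :: "'a::field ^ 'n ^ 'n"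
  assumes w: "monomial_mat w" and roots: "\<And>i. root_of_unity (monomial_coeff w i / monomial_coeff w j)"
  shows "mat (inverse (monomial_coeff w j)) ** w \<in> Mtilde"
proof -
  let ?c = "inverse (monomial_coeff w j)"
  have "?c \<noteq> 0"
    using monomial_coeff_nonzero[OF w] by simp
  then have nonzero_iff: "(mat ?c ** w) $ i $ k \<noteq> 0 \<longleftrightarrow> k = monomial_perm w i" for i k
    by (simp add: mat_mult_entry monomial_mat_nonzero_iff[OF w])
  have "monomial_mat (mat ?c ** w)"
    unfolding monomial_mat_def using monomial_perm_permutes[OF w] nonzero_iff by blast
  moreover have "root_of_unity ((mat ?c ** w) $ i $ k)" if "(mat ?c ** w) $ i $ k \<noteq> 0" for i k
    using roots[of i] that nonzero_iff
    by (simp add: mat_mult_entry monomial_coeff_def divide_inverse mult.commute)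
  ultimately show ?thesis
    unfolding Mtilde_def by blast
qed

lemma conj_Mtilde_scalar_multiple:
  fixes G :: "('a::field ^ 'n ^ 'n) set"
  assumes G: "mat_group G" and GM: "G \<subseteq> Mtilde" and irr: "irreducible_mat_group G"
    and w: "invertible w" "monomial_mat w" and conj: "\<forall>g\<in>G. matrix_inv w ** g ** w \<in> Mtilde"
  shows "\<exists>c. mat c ** w \<in> Mtilde"
proof -
  fix j :: 'n
  have "root_of_unity (monomial_coeff w i / monomial_coeff w j)" for i
  proof -
    obtain g where "g \<in> G" "monomial_perm g j = i"
      using monomial_group_transitive[OF G _ irr] GM Mtilde_monomial by blast
    then show ?thesis
      using Mtilde_intertwined_coeff_ratio[OF w(2) _ _ conj_intertwines[OF w(1)]] GM conj by blast
  qed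
  then show ?thesis
    using mat_mult_monomial_Mtilde[OF w(2)] by blast
qed

theorem theorem2p10:
  fixes G :: "('a::field ^ 'n ^ 'n) set" and w :: "'a ^ 'n ^ 'n"
  assumes "prime CARD('n)"
    and "mat_group G" and "G \<subseteq> Mtilde" and "irreducible_mat_group G"
    and "\<not> (G \<inter> diag_group \<subseteq> range (\<lambda>c. mat c))"
    and "invertible w"
    and "\<forall>g\<in>G. matrix_inv w ** g ** w \<in> Mtilde"
    and "\<forall>a\<in>G \<inter> diag_group. matrix_inv w ** a ** w \<in> diag_group"
  shows "monomial_mat w \<and>
         (alg_closed_field TYPE('a) \<longrightarrow> (\<exists>c. mat c ** w \<in> Mtilde))"
proof -
  have mono: "\<And>g. g \<in> G \<Longrightarrow> monomial_mat g"
    using assms(3) Mtilde_monomial by blast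
  have "inj (diag_char (G \<inter> diag_group))"
    using diag_char_inj[OF assms(1,2) mono assms(4,5)] .
  then have "monomial_mat w"
    using monomial_mat_if_conj_diagonal[OF assms(6) _ _ assms(8)] by blast
  moreover have "\<exists>c. mat c ** w \<in> Mtilde"
    using conj_Mtilde_scalar_multiple[OF assms(2-4,6) \<open>monomial_mat w\<close> assms(7)] .
  ultimately show ?thesis
    by blast
qed

end
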